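(* Let $S$ be an inverse semigroup that is a mirror semigroup, with semilattice of idempotents $\Sigma$. If $(S,\leqslant)$ is a continuous poset (resp. a dcpo, a domain, an algebraic poset), then $(\Sigma,\leqslant)$ is a continuous poset (resp. a dcpo, a domain, an algebraic poset).
   Context: An inverse semigroup is a semigroup $S$ in which every $s$ has a unique $s^*$ with $ss^*s=s$ and $s^*ss^*=s^*$. $\Sigma=\Sigma(S)$ is the set of idempotents. The intrinsic order is $s\leqslant t$ iff $s=t\epsilon$ for some idempotent $\epsilon$. A subset is directed if nonempty and any two elements have an upper bound in it. $S$ is a mirror semigroup if every directed subset of $\Sigma$ having a supremum in $(\Sigma,\leqslant)$ also has a supremum in $(S,\leqslant)$. In a poset, $x$ is way-below $y$ ($x\ll y$) if for every directed subset $D$ that has a supremum with $y\leqslant \sup D$, there is $d\in D$ with $x\leqslant d$. A poset is continuous if for every $s$ the set $\{t : t\ll s\}$ is directed with supremum $s$. A dcpo is a poset in which every directed subset has a supremum; a domain is a continuous dcpo. An element $k$ is compact if $k\ll k$; a poset is algebraic if every element is the supremum of the directed set of compact elements below it. *)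

theory Defs
  imports Main
begin

text \<open>Inverse semigroups: the ambient type 'a carries an associative multiplication
  (class semigroup_mult); the whole type is the semigroup S.\<close>

definition inverse_semigroup :: "('a::semigroup_mult) itself \<Rightarrow> bool" where
  "inverse_semigroup _ \<longleftrightarrow> (\<forall>s::'a. \<exists>!t. s * t * s = s \<and> t * s * t = t)"

definition idempotents :: "('a::semigroup_mult) set" where
  "idempotents = {e. e * e = e}"

definition nat_le :: "'a::semigroup_mult \<Rightarrow> 'a \<Rightarrow> bool" where
  "nat_le s t \<longleftrightarrow> (\<exists>e\<in>idempotents. s = t * e)"

definition directed_in :: "'a set \<Rightarrow> ('a \<Rightarrow> 'a \<Rightarrow> bool) \<Rightarrow> 'a set \<Rightarrow> bool" where
  "directed_in X le D \<longleftrightarrow> D \<subseteq> X \<and> D \<noteq> {} \<and>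
     (\<forall>a\<in>D. \<forall>b\<in>D. \<exists>c\<in>D. le a c \<and> le b c)"

definition is_sup_in :: "'a set \<Rightarrow> ('a \<Rightarrow> 'a \<Rightarrow> bool) \<Rightarrow> 'a set \<Rightarrow> 'a \<Rightarrow> bool" where
  "is_sup_in X le D s \<longleftrightarrow> s \<in> X \<and> (\<forall>d\<in>D. le d s) \<and>
     (\<forall>u\<in>X. (\<forall>d\<in>D. le d u) \<longrightarrow> le s u)"

definition way_below_in :: "'a set \<Rightarrow> ('a \<Rightarrow> 'a \<Rightarrow> bool) \<Rightarrow> 'a \<Rightarrow> 'a \<Rightarrow> bool" where
  "way_below_in X le x y \<longleftrightarrow>
     (\<forall>D. directed_in X le D \<longrightarrow> (\<forall>s. is_sup_in X le D s \<longrightarrow> le y s \<longrightarrow> (\<exists>d\<in>D. le x d)))"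

definition continuous_poset :: "'a set \<Rightarrow> ('a \<Rightarrow> 'a \<Rightarrow> bool) \<Rightarrow> bool" where
  "continuous_poset X le \<longleftrightarrow> (\<forall>s\<in>X.
     directed_in X le {t\<in>X. way_below_in X le t s} \<and>
     is_sup_in X le {t\<in>X. way_below_in X le t s} s)"

definition dcpo_in :: "'a set \<Rightarrow> ('a \<Rightarrow> 'a \<Rightarrow> bool) \<Rightarrow> bool" where
  "dcpo_in X le \<longleftrightarrow> (\<forall>D. directed_in X le D \<longrightarrow> (\<exists>s. is_sup_in X le D s))"

definition domain_in :: "'a set \<Rightarrow> ('a \<Rightarrow> 'a \<Rightarrow> bool) \<Rightarrow> bool" where
  "domain_in X le \<longleftrightarrow> continuous_poset X le \<and> dcpo_in X le"

definition compact_in :: "'a set \<Rightarrow> ('a \<Rightarrow> 'a \<Rightarrow> bool) \<Rightarrow> 'a \<Rightarrow> bool" where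
  "compact_in X le k \<longleftrightarrow> k \<in> X \<and> way_below_in X le k k"

definition algebraic_poset :: "'a set \<Rightarrow> ('a \<Rightarrow> 'a \<Rightarrow> bool) \<Rightarrow> bool" where
  "algebraic_poset X le \<longleftrightarrow> (\<forall>s\<in>X.
     directed_in X le {k. compact_in X le k \<and> le k s} \<and>
     is_sup_in X le {k. compact_in X le k \<and> le k s} s)"

definition mirror_semigroup :: "('a::semigroup_mult) itself \<Rightarrow> bool" where
  "mirror_semigroup _ \<longleftrightarrow> (\<forall>D::'a set.
     directed_in idempotents nat_le D \<longrightarrow> (\<exists>s. is_sup_in idempotents nat_le D s) \<longrightarrow>
     (\<exists>s. is_sup_in UNIV nat_le D s))"

end

theory Submission
  imports Defs
begin

text \<open>The idempotents form a down-closed subset of \<open>S\<close>, and a supremum in \<open>S\<close> of a set of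
  idempotents is again idempotent, hence is its supremum in \<open>\<Sigma>\<close>. Conversely, the mirror
  property makes every directed supremum in \<open>\<Sigma>\<close> a supremum in \<open>S\<close>, so \<open>x \<ll> y\<close> in \<open>S\<close> implies
  \<open>x \<ll> y\<close> in \<open>\<Sigma>\<close>. For an idempotent \<open>e\<close>, the elements way below (or compact and below) \<open>e\<close>
  in \<open>S\<close> therefore form a directed set of idempotents with supremum \<open>e\<close> in \<open>\<Sigma>\<close>, contained in the
  corresponding set computed in \<open>\<Sigma>\<close>; the latter set inherits directedness and supremum \<open>e\<close>.\<close>

lemma directed_in_mono:
  "directed_in Y le D \<Longrightarrow> Y \<subseteq> X \<Longrightarrow> directed_in X le D"
  by (auto simp: directed_in_def)

lemma way_below_in_imp_le:
  assumes "reflp_on X le" and "y \<in> X" and "way_below_in X le x y"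
  shows "le x y"
proof -
  have "le y y" using assms(1,2) by (rule reflp_onD)
  then have "directed_in X le {y}" and "is_sup_in X le {y} y"
    using assms(2) by (auto simp: directed_in_def is_sup_in_def)
  then show ?thesis
    using assms(3) \<open>le y y\<close> unfolding way_below_in_def by blast
qed

lemma way_below_in_if_compact_le:
  assumes "transp le" and "way_below_in X le k k" and "le k y"
  shows "way_below_in X le k y"
  unfolding way_below_in_def
proof (intro allI impI)
  fix D s assume "directed_in X le D" "is_sup_in X le D s" "le y s"
  moreover have "le k s" using transpD[OF assms(1) assms(3) \<open>le y s\<close>] .
  ultimately show "\<exists>d\<in>D. le k d" using assms(2) unfolding way_below_in_def by blast
qed

lemma directed_sup_if_between:
  assumes "transp le" and "le s s"
    and "P \<subseteq> Q" "Q \<subseteq> Y"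
    and P: "directed_in Y le P" "is_sup_in Y le P s"
    and Q: "\<And>q. q \<in> Q \<Longrightarrow> le q s \<and> way_below_in Y le q s"
  shows "directed_in Y le Q \<and> is_sup_in Y le Q s"
proof
  have below_P: "\<exists>p\<in>P. le q p" if "q \<in> Q" for q
    using Q[OF that] P \<open>le s s\<close> unfolding way_below_in_def by blast
  show "directed_in Y le Q"
    unfolding directed_in_def
  proof (intro conjI ballI)
    show "Q \<subseteq> Y" "Q \<noteq> {}"
      using P \<open>P \<subseteq> Q\<close> \<open>Q \<subseteq> Y\<close> by (auto simp: directed_in_def)
    fix a b assume "a \<in> Q" "b \<in> Q"
    then obtain p1 p2 where "p1 \<in> P" "le a p1" "p2 \<in> P" "le b p2"
      using below_P by blast
    moreover obtain p where "p \<in> P" "le p1 p" "le p2 p"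
      using P(1) \<open>p1 \<in> P\<close> \<open>p2 \<in> P\<close> unfolding directed_in_def by blast
    ultimately have "le a p" "le b p"
      using transpD[OF \<open>transp le\<close>] by blast+
    then show "\<exists>c\<in>Q. le a c \<and> le b c"
      using \<open>p \<in> P\<close> \<open>P \<subseteq> Q\<close> by blast
  qed
  have "le s u" if "u \<in> Y" "\<forall>q\<in>Q. le q u" for u
    using P(2) \<open>P \<subseteq> Q\<close> that unfolding is_sup_in_def by blast
  then show "is_sup_in Y le Q s"
    using P(2) Q unfolding is_sup_in_def by blast
qed

definition semigroup_inverse :: "'a::semigroup_mult \<Rightarrow> 'a" where
  "semigroup_inverse s = (THE t. s * t * s = s \<and> t * s * t = t)"

context
  fixes type :: "'a::semigroup_mult itself"
  assumes inverse: "inverse_semigroup TYPE('a)"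
begin

lemma semigroup_inverse:
  "(s::'a) * semigroup_inverse s * s = s" "semigroup_inverse s * s * semigroup_inverse s = semigroup_inverse s"
proof -
  have "\<exists>!t. s * t * s = s \<and> t * s * t = t"
    using inverse unfolding inverse_semigroup_def by blast
  then have "s * semigroup_inverse s * s = s \<and> semigroup_inverse s * s * semigroup_inverse s = semigroup_inverse s"
    unfolding semigroup_inverse_def by (rule theI')
  then show "s * semigroup_inverse s * s = s" "semigroup_inverse s * s * semigroup_inverse s = semigroup_inverse s"
    by auto
qed

lemma semigroup_inverse_unique:
  "(s::'a) * t * s = s \<Longrightarrow> t * s * t = t \<Longrightarrow> t = semigroup_inverse s"
  using inverse semigroup_inverse[of s] unfolding inverse_semigroup_def by blast

lemma semigroup_inverse_idempotent:
  "(e::'a) * e = e \<Longrightarrow> semigroup_inverse e = e"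
  using semigroup_inverse_unique[of e e] by simp

text \<open>With \<open>x\<close> the inverse of \<open>a b\<close>, also \<open>b x a\<close> is an inverse of \<open>a b\<close>, so \<open>x = b x a\<close>; this
  makes \<open>x\<close> idempotent, and then \<open>a b\<close>, as the inverse of \<open>x\<close>, equals \<open>x\<close>.\<close>

lemma idempotent_mult_idempotent:
  assumes a: "(a::'a) * a = a" and b: "b * b = b"
  shows "a * b * (a * b) = a * b"
proof -
  define x where "x = semigroup_inverse (a * b)"
  have x1: "a * b * x * (a * b) = a * b" and x2: "x * (a * b) * x = x"
    using semigroup_inverse[of "a * b"] unfolding x_def by auto
  have "a * b * (b * x * a) * (a * b) = a * (b * b) * x * (a * a) * b"
    by (simp add: mult.assoc)
  also have "\<dots> = a * b" using a b x1 by (simp add: mult.assoc)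
  finally have y1: "a * b * (b * x * a) * (a * b) = a * b" .
  have "b * x * a * (a * b) * (b * x * a) = b * (x * (a * a) * (b * b) * x) * a"
    by (simp add: mult.assoc)
  also have "\<dots> = b * x * a" using a b x2 by (simp add: mult.assoc)
  finally have y2: "b * x * a * (a * b) * (b * x * a) = b * x * a" .
  have bxa: "b * x * a = x"
    using semigroup_inverse_unique[OF y1 y2] unfolding x_def by simp
  have "x * x = b * (x * (a * b) * x) * a"
    using bxa by (metis mult.assoc)
  also have "\<dots> = x" using x2 bxa by (simp add: mult.assoc)
  finally have xx: "x * x = x" .
  have "a * b = semigroup_inverse x"
    using semigroup_inverse_unique[of x "a * b"] x1 x2 by simp
  also have "\<dots> = x" using semigroup_inverse_idempotent[OF xx] .
  finally show ?thesis using xx by simp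
qed

lemma idempotents_commute:
  assumes e: "(e::'a) * e = e" and f: "f * f = f"
  shows "e * f = f * e"
proof -
  have "f * e * (e * f) * (f * e) = f * (e * e) * (f * f) * e"
    by (simp add: mult.assoc)
  also have "\<dots> = f * e * (f * e)"
    using e f by (simp add: mult.assoc)
  also have "\<dots> = f * e" using idempotent_mult_idempotent[OF f e] .
  finally have z1: "f * e * (e * f) * (f * e) = f * e" .
  have "e * f * (f * e) * (e * f) = e * (f * f) * (e * e) * f"
    by (simp add: mult.assoc)
  also have "\<dots> = e * f * (e * f)"
    using e f by (simp add: mult.assoc)
  also have "\<dots> = e * f" using idempotent_mult_idempotent[OF e f] .
  finally have z2: "e * f * (f * e) * (e * f) = e * f" .
  have "e * f = semigroup_inverse (f * e)"
    using semigroup_inverse_unique[OF z1 z2] .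
  also have "\<dots> = f * e"
    using semigroup_inverse_idempotent[OF idempotent_mult_idempotent[OF f e]] .
  finally show ?thesis .
qed

lemma mult_idempotents:
  "(e::'a) \<in> idempotents \<Longrightarrow> f \<in> idempotents \<Longrightarrow> e * f \<in> idempotents"
  using idempotent_mult_idempotent by (simp add: idempotents_def)

lemma mult_semigroup_inverse_idempotent: "(s::'a) * semigroup_inverse s \<in> idempotents"
proof -
  have "s * semigroup_inverse s * (s * semigroup_inverse s) = (s * semigroup_inverse s * s) * semigroup_inverse s"
    by (simp add: mult.assoc)
  then show ?thesis using semigroup_inverse(1) by (simp add: idempotents_def)
qed

lemma semigroup_inverse_mult_idempotent: "semigroup_inverse (s::'a) * s \<in> idempotents"
proof -
  have "semigroup_inverse s * s * (semigroup_inverse s * s) = (semigroup_inverse s * s * semigroup_inverse s) * s"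
    by (simp add: mult.assoc)
  then show ?thesis using semigroup_inverse(2) by (simp add: idempotents_def)
qed

lemma idempotent_mult_conjugate:
  assumes e: "(e::'a) \<in> idempotents"
  shows "e * x = x * (semigroup_inverse x * e * x)"
    and "semigroup_inverse x * e * x \<in> idempotents"
proof -
  let ?x' = "semigroup_inverse x"
  have ee: "e * e = e" using e by (simp add: idempotents_def)
  have "x * ?x' * (x * ?x') = x * ?x'"
    using mult_semigroup_inverse_idempotent by (simp add: idempotents_def)
  then have c: "x * ?x' * e = e * (x * ?x')"
    using idempotents_commute ee by blast
  have "x * (?x' * e * x) = (x * ?x' * e) * x" by (simp add: mult.assoc)
  also have "\<dots> = e * (x * ?x' * x)" using c by (simp add: mult.assoc)
  finally show "e * x = x * (?x' * e * x)" using semigroup_inverse(1) by simp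
  have "?x' * e * x * (?x' * e * x) = ?x' * (e * (x * ?x')) * e * x"
    by (simp add: mult.assoc)
  also have "\<dots> = ?x' * (x * ?x' * e) * e * x" using c by simp
  also have "\<dots> = (?x' * x * ?x') * (e * e) * x" by (simp add: mult.assoc)
  also have "\<dots> = ?x' * e * x" using semigroup_inverse(2) ee by simp
  finally show "?x' * e * x \<in> idempotents" by (simp add: idempotents_def)
qed

lemma nat_le_refl: "nat_le (s::'a) s"
  unfolding nat_le_def
  using semigroup_inverse_mult_idempotent semigroup_inverse(1) by (metis mult.assoc)

lemma nat_le_trans: "nat_le (s::'a) t \<Longrightarrow> nat_le t u \<Longrightarrow> nat_le s u"
  unfolding nat_le_def by (metis mult.assoc mult_idempotents)

lemma reflp_on_nat_le: "reflp_on X (nat_le :: 'a \<Rightarrow> 'a \<Rightarrow> bool)"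
  by (simp add: reflp_onI nat_le_refl)

lemma transp_nat_le: "transp (nat_le :: 'a \<Rightarrow> 'a \<Rightarrow> bool)"
  using nat_le_trans by (rule transpI)

lemma nat_le_antisym:
  assumes "nat_le (s::'a) t" "nat_le t s"
  shows "s = t"
proof -
  obtain e where e: "e \<in> idempotents" "s = t * e" using assms(1) by (auto simp: nat_le_def)
  obtain f where f: "f \<in> idempotents" "t = s * f" using assms(2) by (auto simp: nat_le_def)
  have ee: "e * e = e" and ff: "f * f = f" using e f by (auto simp: idempotents_def)
  have sfe: "s = s * f * e" using e f by simp
  have "s * f = s * f * e * f" using sfe by simp
  also have "\<dots> = s * (f * f) * e" using idempotents_commute[OF ee ff] by (simp add: mult.assoc)
  also have "\<dots> = s" using ff sfe by simp
  finally show ?thesis using f by simp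
qed

lemma nat_le_idempotent: "nat_le (s::'a) e \<Longrightarrow> e \<in> idempotents \<Longrightarrow> s \<in> idempotents"
  using mult_idempotents by (auto simp: nat_le_def)

lemma nat_le_mult:
  assumes "nat_le (a::'a) b" "nat_le c d"
  shows "nat_le (a * c) (b * d)"
proof -
  obtain e where e: "e \<in> idempotents" "a = b * e" using assms(1) by (auto simp: nat_le_def)
  obtain f where f: "f \<in> idempotents" "c = d * f" using assms(2) by (auto simp: nat_le_def)
  let ?e' = "semigroup_inverse d * e * d"
  have "a * c = b * (e * d) * f" using e f by (simp add: mult.assoc)
  also have "\<dots> = b * (d * ?e') * f"
    using idempotent_mult_conjugate(1)[OF e(1), of d] by simp
  also have "\<dots> = b * d * (?e' * f)" by (simp add: mult.assoc)
  finally show ?thesis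
    using mult_idempotents[OF idempotent_mult_conjugate(2)[OF e(1)] f(1)]
    by (auto simp: nat_le_def)
qed

text \<open>If \<open>s\<close> is the supremum of idempotents \<open>d = d d \<le> s s\<close>, then \<open>s \<le> s s\<close>, i.e. \<open>s = s s g\<close> with
  \<open>g\<close> idempotent, whence \<open>s g = s\<close> and \<open>s = s s\<close>.\<close>

lemma sup_of_idempotents_idempotent:
  assumes D: "D \<subseteq> (idempotents::'a set)" and s: "is_sup_in UNIV nat_le D s"
  shows "s \<in> idempotents"
proof -
  have "nat_le d (s * s)" if "d \<in> D" for d
    using nat_le_mult[of d s d s] that s D by (auto simp: is_sup_in_def idempotents_def)
  then have "nat_le s (s * s)" using s by (auto simp: is_sup_in_def)
  then obtain g where g: "g * g = g" "s = s * s * g" by (auto simp: nat_le_def idempotents_def)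
  then have "s * g = s" by (metis mult.assoc)
  moreover have "s = s * (s * g)" using g by (simp add: mult.assoc)
  ultimately show ?thesis by (simp add: idempotents_def)
qed

lemma is_sup_in_idempotents_if_UNIV:
  "D \<subseteq> (idempotents::'a set) \<Longrightarrow> is_sup_in UNIV nat_le D s \<Longrightarrow> is_sup_in idempotents nat_le D s"
  using sup_of_idempotents_idempotent by (auto simp: is_sup_in_def)

lemma is_sup_in_UNIV_if_idempotents:
  assumes "mirror_semigroup TYPE('a)"
    and D: "directed_in (idempotents::'a set) nat_le D" and e: "is_sup_in idempotents nat_le D e"
  shows "is_sup_in UNIV nat_le D e"
proof -
  obtain s where s: "is_sup_in UNIV nat_le D s"
    using assms unfolding mirror_semigroup_def by blast
  have "is_sup_in idempotents nat_le D s"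
    using is_sup_in_idempotents_if_UNIV D s by (auto simp: directed_in_def)
  then have "s = e" using nat_le_antisym e by (auto simp: is_sup_in_def)
  then show ?thesis using s by simp
qed

lemma way_below_in_idempotents:
  assumes "mirror_semigroup TYPE('a)" and "way_below_in UNIV nat_le (x::'a) y"
  shows "way_below_in idempotents nat_le x y"
  using assms is_sup_in_UNIV_if_idempotents directed_in_mono[of idempotents nat_le _ UNIV]
  unfolding way_below_in_def by blast

lemma continuous_poset_idempotents:
  assumes "mirror_semigroup TYPE('a)" and cont: "continuous_poset (UNIV::'a set) nat_le"
  shows "continuous_poset (idempotents::'a set) nat_le"
  unfolding continuous_poset_def
proof
  fix e :: 'a assume e: "e \<in> idempotents"
  let ?P = "{t\<in>UNIV. way_below_in UNIV nat_le t e}"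
  let ?Q = "{t\<in>idempotents. way_below_in idempotents nat_le t e}"
  have P: "directed_in UNIV nat_le ?P" "is_sup_in UNIV nat_le ?P e"
    using cont unfolding continuous_poset_def by blast+
  have below: "nat_le t e" if "way_below_in idempotents nat_le t e \<or> way_below_in UNIV nat_le t e" for t
    using that way_below_in_imp_le[OF reflp_on_nat_le] e by blast
  have "?P \<subseteq> idempotents"
    using below nat_le_idempotent e by blast
  then have PQ: "?P \<subseteq> ?Q"
    using way_below_in_idempotents[OF assms(1)] by blast
  have "directed_in idempotents nat_le ?P" "is_sup_in idempotents nat_le ?P e"
    using P \<open>?P \<subseteq> idempotents\<close> is_sup_in_idempotents_if_UNIV by (auto simp: directed_in_def)
  moreover have "nat_le q e \<and> way_below_in idempotents nat_le q e" if "q \<in> ?Q" for q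
    using that below by blast
  ultimately show "directed_in idempotents nat_le ?Q \<and> is_sup_in idempotents nat_le ?Q e"
    using directed_sup_if_between[OF transp_nat_le nat_le_refl PQ]
    by blast
qed

lemma dcpo_in_idempotents:
  assumes "dcpo_in (UNIV::'a set) nat_le"
  shows "dcpo_in (idempotents::'a set) nat_le"
  unfolding dcpo_in_def
proof (intro allI impI)
  fix D :: "'a set" assume D: "directed_in idempotents nat_le D"
  then obtain s where "is_sup_in UNIV nat_le D s"
    using assms directed_in_mono[of idempotents] unfolding dcpo_in_def by blast
  moreover have "D \<subseteq> idempotents" using D by (simp add: directed_in_def)
  ultimately show "\<exists>s. is_sup_in idempotents nat_le D s"
    using is_sup_in_idempotents_if_UNIV by blast
qed

lemma algebraic_poset_idempotents:
  assumes "mirror_semigroup TYPE('a)" and alg: "algebraic_poset (UNIV::'a set) nat_le"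
  shows "algebraic_poset (idempotents::'a set) nat_le"
  unfolding algebraic_poset_def
proof
  fix e :: 'a assume e: "e \<in> idempotents"
  let ?P = "{k. compact_in UNIV nat_le k \<and> nat_le k e}"
  let ?Q = "{k. compact_in idempotents nat_le k \<and> nat_le k e}"
  have P: "directed_in UNIV nat_le ?P" "is_sup_in UNIV nat_le ?P e"
    using alg unfolding algebraic_poset_def by blast+
  have "?P \<subseteq> idempotents"
    using nat_le_idempotent e by blast
  then have PQ: "?P \<subseteq> ?Q"
    using way_below_in_idempotents[OF assms(1)] by (auto simp: compact_in_def)
  have "directed_in idempotents nat_le ?P" "is_sup_in idempotents nat_le ?P e"
    using P \<open>?P \<subseteq> idempotents\<close> is_sup_in_idempotents_if_UNIV by (auto simp: directed_in_def)
  moreover have "nat_le q e \<and> way_below_in idempotents nat_le q e" if "q \<in> ?Q" for q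
    using that way_below_in_if_compact_le[OF transp_nat_le]
    by (auto simp: compact_in_def)
  moreover have "?Q \<subseteq> idempotents" by (auto simp: compact_in_def)
  ultimately show "directed_in idempotents nat_le ?Q \<and> is_sup_in idempotents nat_le ?Q e"
    using directed_sup_if_between[OF transp_nat_le nat_le_refl PQ]
    by blast
qed

end

theorem lemma5p2:
  assumes "inverse_semigroup TYPE('a::semigroup_mult)"
    and "mirror_semigroup TYPE('a)"
  shows "(continuous_poset (UNIV::'a set) nat_le \<longrightarrow> continuous_poset (idempotents::'a set) nat_le)
       \<and> (dcpo_in (UNIV::'a set) nat_le \<longrightarrow> dcpo_in (idempotents::'a set) nat_le)
       \<and> (domain_in (UNIV::'a set) nat_le \<longrightarrow> domain_in (idempotents::'a set) nat_le)
       \<and> (algebraic_poset (UNIV::'a set) nat_le \<longrightarrow> algebraic_poset (idempotents::'a set) nat_le)"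
  using continuous_poset_idempotents[OF assms] dcpo_in_idempotents[OF assms(1)]
    algebraic_poset_idempotents[OF assms]
  unfolding domain_in_def by blast

end
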